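(* Let $K$ be an oriented virtual knot diagram with a positive classical crossing $l$, and let $K'$ be the diagram obtained from $K$ by switching $l$ to a negative crossing. Then $\gamma(K)+\gamma(K')\equiv 0 \pmod 2$ (coefficientwise).
   Context: For an oriented virtual knot diagram $K$ and a classical crossing $c$ with sign $sgn(c)\in\{\pm1\}$, let $K_c$ be the two-component oriented virtual link diagram obtained by smoothing $c$ in the orientation-respecting way. Let $L(K_c)$ be the sum of the signs of all classical crossings of $K_c$ at which the two strands belong to different components, and $\bar L(K_c)=L(K_c)\bmod 2\in\{0,1\}$. Define $\gamma(K)=\sum_{c} t^{\bar L(K_c)}\,sgn(c)$, summing over all classical crossings, an element of the free $\mathbb{Z}$-module on $\{1,t\}$. *)

theory Defs
  imports Main
begin

text \<open>An oriented virtual knot diagram with n classical crossings, labelled 0..<n,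
  is encoded by its Gauss diagram: the cyclic Gauss word read along the oriented
  knot, starting at a base point, given as a list of (crossing label, passes-over?)
  pairs, together with the sign function of the crossings. Virtual crossings do
  not appear in the Gauss word.\<close>

definition gauss_diagram :: "nat \<Rightarrow> (nat \<times> bool) list \<Rightarrow> (nat \<Rightarrow> int) \<Rightarrow> bool" where
  "gauss_diagram n w s \<longleftrightarrow>
     length w = 2 * n \<and> (\<forall>x\<in>set w. fst x < n) \<and>
     (\<forall>c<n. card {i. i < length w \<and> w ! i = (c, True)} = 1
           \<and> card {i. i < length w \<and> w ! i = (c, False)} = 1) \<and>
     (\<forall>c<n. s c = 1 \<or> s c = -1)"

definition occ :: "(nat \<times> bool) list \<Rightarrow> nat \<Rightarrow> nat set" where
  "occ w c = {i. i < length w \<and> fst (w ! i) = c}"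

text \<open>Orientation-respecting smoothing at c: the knot splits into two components;
  one of them consists of the positions strictly between the two passes through c.\<close>
definition smooth_comp :: "(nat \<times> bool) list \<Rightarrow> nat \<Rightarrow> nat set" where
  "smooth_comp w c = {Min (occ w c)<..<Max (occ w c)}"

text \<open>Crossing d (d \<noteq> c) of K_c has its two strands on different components.\<close>
definition mixed :: "(nat \<times> bool) list \<Rightarrow> nat \<Rightarrow> nat \<Rightarrow> bool" where
  "mixed w c d \<longleftrightarrow> card (occ w d \<inter> smooth_comp w c) = 1"

definition Lk :: "nat \<Rightarrow> (nat \<times> bool) list \<Rightarrow> (nat \<Rightarrow> int) \<Rightarrow> nat \<Rightarrow> int" where
  "Lk n w s c = (\<Sum>d\<in>{0..<n} - {c}. if mixed w c d then s d else 0)"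

definition Lbar :: "nat \<Rightarrow> (nat \<times> bool) list \<Rightarrow> (nat \<Rightarrow> int) \<Rightarrow> nat \<Rightarrow> int" where
  "Lbar n w s c = Lk n w s c mod 2"

text \<open>gamma(K) in the free Z-module on {1, t}, as the pair
  (coefficient of 1, coefficient of t).\<close>
definition gamma :: "nat \<Rightarrow> (nat \<times> bool) list \<Rightarrow> (nat \<Rightarrow> int) \<Rightarrow> int \<times> int" where
  "gamma n w s =
     ((\<Sum>c\<in>{c. c < n \<and> Lbar n w s c = 0}. s c),
      (\<Sum>c\<in>{c. c < n \<and> Lbar n w s c = 1}. s c))"

definition switch_word :: "(nat \<times> bool) list \<Rightarrow> nat \<Rightarrow> (nat \<times> bool) list" where
  "switch_word w l = map (\<lambda>(c, b). if c = l then (c, \<not> b) else (c, b)) w"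

definition switch_sign :: "(nat \<Rightarrow> int) \<Rightarrow> nat \<Rightarrow> nat \<Rightarrow> int" where
  "switch_sign s l = s(l := - s l)"

end

theory Submission
  imports Defs
begin

text \<open>A crossing change alters only the over/under information of the Gauss word, so
  the smoothings of K and K' and their mixed crossings coincide. The signs differ only
  at l, by a negation, which is invisible modulo 2; hence every crossing contributes to
  the same coefficient of gamma for K and for K'. Each coefficient of gamma(K) + gamma(K')
  is then a sum of terms s c + s' c, each equal to 0 (for c = l) or to 2 s c.\<close>

lemma occ_switch_word: "occ (switch_word w l) d = occ w d"
  unfolding occ_def switch_word_def by (auto simp: case_prod_beta)

lemma mixed_switch_word: "mixed (switch_word w l) c d = mixed w c d"
  unfolding mixed_def smooth_comp_def occ_switch_word ..

lemma switch_sign_mod_2: "switch_sign s l d mod 2 = s d mod 2"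
  unfolding switch_sign_def by (simp add: minus_mod_self1 zmod_zminus1_eq_if)

lemma sum_mod_2_cong:
  fixes f g :: "'a \<Rightarrow> int"
  assumes "\<And>x. f x mod 2 = g x mod 2"
  shows "sum f A mod 2 = sum g A mod 2"
proof -
  have "sum f A mod 2 = (\<Sum>x\<in>A. f x mod 2) mod 2"
    by (rule mod_sum_eq [symmetric])
  also have "\<dots> = (\<Sum>x\<in>A. g x mod 2) mod 2"
    by (simp only: assms)
  also have "\<dots> = sum g A mod 2"
    by (rule mod_sum_eq)
  finally show ?thesis .
qed

lemma Lbar_switch: "Lbar n (switch_word w l) (switch_sign s l) c = Lbar n w s c"
  unfolding Lbar_def Lk_def mixed_switch_word
  by (rule sum_mod_2_cong) (simp add: switch_sign_mod_2)

lemma even_add_switch_sign: "even (s d + switch_sign s l d)"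
proof -
  have "s d + switch_sign s l d = (if d = l then 0 else 2 * s d)"
    by (simp add: switch_sign_def)
  then show ?thesis
    by simp
qed

lemma sum_add_switch_sign_mod_2: "(sum s A + sum (switch_sign s l) A) mod 2 = 0"
proof -
  have "even (\<Sum>d\<in>A. s d + switch_sign s l d)"
    by (rule dvd_sum) (rule even_add_switch_sign)
  then show ?thesis
    by (simp only: sum.distrib even_iff_mod_2_eq_zero)
qed

theorem mainTheorem5:
  fixes n l :: nat and w :: "(nat \<times> bool) list" and s :: "nat \<Rightarrow> int"
  assumes "gauss_diagram n w s"
    and "l < n" and "s l = 1"
  shows "(fst (gamma n w s) + fst (gamma n (switch_word w l) (switch_sign s l))) mod 2 = 0
       \<and> (snd (gamma n w s) + snd (gamma n (switch_word w l) (switch_sign s l))) mod 2 = 0"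
  unfolding gamma_def Lbar_switch by (simp add: sum_add_switch_sign_mod_2)

end
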